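(* Let $\{z_n\}_{n\ge 0}$ be a sequence of positive real numbers satisfying $a_nz_{n+1}=b_nz_n+c_nz_{n-1}$ for all $n\ge 1$, where $a_n,b_n,c_n>0$. For $n\ge1$ let $\lambda_n=\frac{b_n+\sqrt{b_n^2+4a_nc_n}}{2a_n}$ be the positive root of $a_n\lambda^2-b_n\lambda-c_n=0$. Suppose that $z_0,z_1,z_2,z_3$ is log-convex (i.e. $z_0z_2\ge z_1^2$ and $z_1z_3\ge z_2^2$) and that $a_n\lambda_{n-1}\lambda_{n+1}-b_n\lambda_{n-1}-c_n\ge 0$ for all $n\ge 2$. Then $\{z_n\}_{n\ge 0}$ is log-convex.
   Context: A sequence $a_0,a_1,\ldots$ of nonnegative real numbers is log-convex if $a_{k-1}a_{k+1}\ge a_k^2$ for all $k\ge 1$. *)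

theory Defs
  imports Complex_Main
begin

definition log_convex :: "(nat \<Rightarrow> real) \<Rightarrow> bool" where
  "log_convex a \<longleftrightarrow> (\<forall>k. a k \<ge> 0) \<and> (\<forall>k\<ge>1. a (k - 1) * a (k + 1) \<ge> (a k)^2)"

end

theory Submission
  imports Defs
begin

text \<open>Write \<open>\<lambda>\<^sub>n\<close> for the positive root of \<open>a\<^sub>n x\<^sup>2 = b\<^sub>n x + c\<^sub>n\<close>.
  Log-convexity at \<open>n\<close> is sandwiched as \<open>z\<^sub>n / z\<^sub>n\<^sub>-\<^sub>1 \<le> \<lambda>\<^sub>n \<le> z\<^sub>n\<^sub>+\<^sub>1 / z\<^sub>n\<close>.
  By the recurrence, the left inequality at \<open>n\<close> implies the right one, and the right inequality
  at \<open>n - 1\<close> together with the hypothesis on \<open>\<lambda>\<^sub>n\<^sub>-\<^sub>1 \<lambda>\<^sub>n\<^sub>+\<^sub>1\<close> gives the left one at \<open>n + 1\<close>.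
  So \<open>z\<^sub>n / z\<^sub>n\<^sub>-\<^sub>1 \<le> \<lambda>\<^sub>n\<close> propagates from \<open>n\<close> to \<open>n + 2\<close>, and the initial log-convexity
  of \<open>z\<^sub>0, \<dots>, z\<^sub>3\<close> supplies it for \<open>n = 1, 2\<close>.\<close>

definition pos_root :: "real \<Rightarrow> real \<Rightarrow> real \<Rightarrow> real" where
  "pos_root a b c = (b + sqrt (b\<^sup>2 + 4 * a * c)) / (2 * a)"

lemma two_mult_pos_root:
  assumes "a \<noteq> 0"
  shows "2 * a * pos_root a b c = b + sqrt (b\<^sup>2 + 4 * a * c)"
  using assms by (simp add: pos_root_def)

lemma pos_root_sq:
  assumes "a > 0" "c \<ge> 0"
  shows "a * (pos_root a b c)\<^sup>2 = b * pos_root a b c + c"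
proof -
  define s where "s = sqrt (b\<^sup>2 + 4 * a * c)"
  have root: "2 * a * pos_root a b c = b + s" and s2: "s\<^sup>2 = b\<^sup>2 + 4 * a * c"
    using two_mult_pos_root[of a b c] assms unfolding s_def by simp_all
  have "4 * a * (a * (pos_root a b c)\<^sup>2) = (b + s)\<^sup>2"
    by (simp flip: root add: power2_eq_square)
  also have "\<dots> = 2 * b * (b + s) + 4 * a * c"
    using s2 by (simp add: power2_eq_square algebra_simps)
  also have "\<dots> = 4 * a * (b * pos_root a b c + c)"
    by (simp flip: root add: algebra_simps)
  finally show ?thesis
    using \<open>a > 0\<close> by simp
qed

lemma pos_root_pos:
  assumes "a > 0" "c > 0"
  shows "pos_root a b c > 0"
proof -
  have "\<bar>b\<bar> = sqrt (b\<^sup>2)"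
    by simp
  also have "\<dots> < sqrt (b\<^sup>2 + 4 * a * c)"
    using assms by (intro real_sqrt_less_mono) simp
  finally show ?thesis
    using assms by (simp add: pos_root_def)
qed

lemma le_pos_root:
  assumes "a > 0" "c \<ge> 0" and below: "a * x\<^sup>2 \<le> b * x + c"
  shows "x \<le> pos_root a b c"
proof (rule ccontr)
  let ?r = "pos_root a b c"
  assume "\<not> x \<le> ?r"
  then have "x > ?r"
    by simp
  have "2 * a * ?r - b \<ge> 0"
    using two_mult_pos_root[of a b c] assms(1,2) by simp
  moreover have "a * (x + ?r) > 2 * a * ?r"
    using \<open>x > ?r\<close> \<open>a > 0\<close> by simp
  ultimately have "(x - ?r) * (a * (x + ?r) - b) > 0"
    using \<open>x > ?r\<close> by simp
  moreover have "(x - ?r) * (a * (x + ?r) - b) = a * x\<^sup>2 - b * x - c"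
    using pos_root_sq[OF assms(1,2), of b] by (simp add: power2_eq_square algebra_simps)
  ultimately show False
    using below by simp
qed

lemma ratio_le_pos_root:
  fixes a b c u v w :: real
  assumes "a > 0" "c \<ge> 0" "u > 0" and rec: "a * w = b * v + c * u"
    and sq_le: "v\<^sup>2 \<le> u * w"
  shows "v \<le> pos_root a b c * u"
proof -
  have "a * (v / u)\<^sup>2 * u\<^sup>2 = a * v\<^sup>2"
    using \<open>u > 0\<close> by (simp add: power_divide)
  also have "\<dots> \<le> u * (a * w)"
    using sq_le \<open>a > 0\<close> by simp
  also have "\<dots> = (b * (v / u) + c) * u\<^sup>2"
    using \<open>u > 0\<close> by (simp add: rec power2_eq_square field_simps)
  finally have "a * (v / u)\<^sup>2 \<le> b * (v / u) + c"
    using \<open>u > 0\<close> by simp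
  then have "v / u \<le> pos_root a b c"
    using le_pos_root \<open>a > 0\<close> \<open>c \<ge> 0\<close> by blast
  then show ?thesis
    using \<open>u > 0\<close> by (simp add: divide_le_eq)
qed

lemma pos_root_mul_le:
  fixes a b c u v w :: real
  assumes "a > 0" "c > 0" and rec: "a * w = b * v + c * u"
    and ratio: "v \<le> pos_root a b c * u"
  shows "pos_root a b c * v \<le> w"
proof -
  let ?r = "pos_root a b c"
  have "?r > 0"
    using pos_root_pos[OF assms(1,2)] .
  have "a * ?r * (?r * v) = (b * ?r + c) * v"
    using pos_root_sq[of a c b] assms(1,2) by (simp add: power2_eq_square algebra_simps)
  also have "\<dots> \<le> b * ?r * v + c * (?r * u)"
    using ratio \<open>c > 0\<close> by (simp add: algebra_simps)
  also have "\<dots> = a * ?r * w"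
    using rec by algebra
  finally show ?thesis
    using \<open>a > 0\<close> \<open>?r > 0\<close> by simp
qed

lemma le_mul_if_ratio_ge:
  fixes a b c p q u v w :: real
  assumes "a > 0" "c \<ge> 0" "p > 0" "v \<ge> 0" and rec: "a * w = b * v + c * u"
    and ratio: "p * u \<le> v" and root_cond: "b * p + c \<le> a * p * q"
  shows "w \<le> q * v"
proof -
  have "a * p * w = b * p * v + c * (p * u)"
    using rec by algebra
  also have "\<dots> \<le> (b * p + c) * v"
    using ratio \<open>c \<ge> 0\<close> by (simp add: mult_left_mono algebra_simps)
  also have "\<dots> \<le> a * p * (q * v)"
    using mult_right_mono[OF root_cond \<open>v \<ge> 0\<close>] by simp
  finally show ?thesis
    using \<open>a > 0\<close> \<open>p > 0\<close> by simp
qed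

lemma sq_le_mul_if_ratios:
  fixes r u v w :: real
  assumes "u \<ge> 0" "v \<ge> 0" "v \<le> r * u" "r * v \<le> w"
  shows "v\<^sup>2 \<le> u * w"
proof -
  have "v\<^sup>2 \<le> r * u * v"
    using assms(2,3) by (simp add: power2_eq_square mult_right_mono)
  also have "\<dots> = u * (r * v)"
    by simp
  also have "\<dots> \<le> u * w"
    using assms(1,4) by (rule mult_left_mono[rotated])
  finally show ?thesis .
qed

lemma log_convexI_ratio_bounds:
  fixes z r :: "nat \<Rightarrow> real"
  assumes "\<And>n. z n \<ge> 0"
    and below: "\<And>n. n \<ge> 1 \<Longrightarrow> z n \<le> r n * z (n - 1)"
    and above: "\<And>n. n \<ge> 1 \<Longrightarrow> r n * z n \<le> z (n + 1)"
  shows "log_convex z"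
  unfolding log_convex_def
proof (intro conjI allI impI)
  show "z n \<ge> 0" for n
    by fact
  show "z (n - 1) * z (n + 1) \<ge> (z n)\<^sup>2" if "n \<ge> 1" for n
    using sq_le_mul_if_ratios[OF assms(1) assms(1) below above] that by blast
qed

theorem theorem3p1:
  fixes z a b c lam :: "nat \<Rightarrow> real"
  assumes zpos: "\<And>n. z n > 0"
    and apos: "\<And>n. n \<ge> 1 \<Longrightarrow> a n > 0"
    and bpos: "\<And>n. n \<ge> 1 \<Longrightarrow> b n > 0"
    and cpos: "\<And>n. n \<ge> 1 \<Longrightarrow> c n > 0"
    and rec: "\<And>n. n \<ge> 1 \<Longrightarrow> a n * z (n + 1) = b n * z n + c n * z (n - 1)"
    and lam_def: "\<And>n. n \<ge> 1 \<Longrightarrow> lam n = (b n + sqrt ((b n)^2 + 4 * a n * c n)) / (2 * a n)"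
    and init1: "z 0 * z 2 \<ge> (z 1)^2"
    and init2: "z 1 * z 3 \<ge> (z 2)^2"
    and cond: "\<And>n. n \<ge> 2 \<Longrightarrow> a n * lam (n - 1) * lam (n + 1) - b n * lam (n - 1) - c n \<ge> 0"
  shows "log_convex z"
proof -
  have lam: "lam n = pos_root (a n) (b n) (c n)" if "n \<ge> 1" for n
    using lam_def[OF that] by (simp add: pos_root_def)
  have c_nonneg: "c n \<ge> 0" and lam_pos: "lam n > 0" if "n \<ge> 1" for n
    using cpos[OF that] pos_root_pos[OF apos cpos, OF that that] by (simp_all add: lam[OF that])
  have start: "z n \<le> lam n * z (n - 1)" if "n \<ge> 1" "(z n)\<^sup>2 \<le> z (n - 1) * z (n + 1)" for n
    using ratio_le_pos_root[OF apos c_nonneg zpos rec] that by (simp add: lam)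
  have up: "lam n * z n \<le> z (n + 1)" if "n \<ge> 1" "z n \<le> lam n * z (n - 1)" for n
    using pos_root_mul_le[OF apos cpos rec] that by (simp add: lam)
  have down: "z (n + 1) \<le> lam (n + 1) * z n"
    if n: "n \<ge> 2" and ratio: "lam (n - 1) * z (n - 1) \<le> z n" for n
  proof -
    have "b n * lam (n - 1) + c n \<le> a n * lam (n - 1) * lam (n + 1)"
      using cond[OF n] by simp
    then show ?thesis
      using le_mul_if_ratio_ge[OF apos c_nonneg lam_pos zpos[THEN less_imp_le] rec ratio] n by simp
  qed
  have ratio: "z (n + 1) \<le> lam (n + 1) * z n" for n
  proof (induction n rule: nat_induct2)
    case 0
    show ?case
      using start[of 1] init1 by (simp add: numeral_eq_Suc)
  next
    case 1
    show ?case
      using start[of 2] init2 by (simp add: numeral_eq_Suc)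
  next
    case (step n)
    then show ?case
      using up[of "n + 1"] down[of "n + 2"] by (simp add: numeral_eq_Suc)
  qed
  have below: "z n \<le> lam n * z (n - 1)" if "n \<ge> 1" for n
    using ratio[of "n - 1"] that by simp
  show ?thesis
    using zpos below up[OF _ below] by (intro log_convexI_ratio_bounds) (auto intro: less_imp_le)
qed

end
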